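(* Let $P_n=\{0,1,2,3\}^n$ with order $\le_n$ and $p^m_k$ restriction to the first $k$ coordinates, let $\mathbb{P}$ be their inverse limit and $\mathbb{O}(\mathbb{P})$ the associated limit of order ideals. For $n\in\mathbb{N}$ let $T_n=\{c\in\{0,1,2,3\}^n:c(0)\in\{0,1\}\}$ and let $q^{n+1}_n:\{0,1,2\}^{T_{n+1}}\to\{0,1,2\}^{T_n}$ be given by $q^{n+1}_n(f)(c)=\max\{f(c^\frown0),f(c^\frown1),\min\{f(c^\frown2),1\},2\min\{f(c^\frown3),1\}\}$, with $q^n_k=q^{k+1}_k\circ\dots\circ q^n_{n-1}$. Then $\mathbb{O}(\mathbb{P})$ is order-isomorphic (hence lattice-isomorphic) to the inverse limit $\{(f_n)\in\prod_n\{0,1,2\}^{T_n}:q^{n+1}_n(f_{n+1})=f_n\ \forall n\}$ with the coordinatewise (pointwise) order.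
   Context: $x\le_n y$ iff $x=y$ or (i) there is $l<n$ with $x(k)=y(k)$ for $k<l$, $x(l)=2$, $y(l)=3$, and $x(k)=y(k)\in\{0,1\}$ for $l<k<n$; or (ii) $x(0)=0$, $y(0)=1$ and $x(k)=y(k)\in\{0,1\}$ for $1\le k<n$. $c^\frown i$ denotes the sequence $c$ extended by $i$. $\mathcal{O}(P_n)$ is the set of down-sets of $P_n$ under inclusion, $\downarrow x=\{m:m\le x\}$; for a quotient map $p:Q\to R$ of finite posets, $\hat p(\emptyset)=\emptyset$ and $\hat p(A)=\bigcup_i\downarrow p(a_i)$ over the maximal elements $a_i$ of $A$; $\mathbb{O}(\mathbb{P})=\{(A_n)\in\prod_n\mathcal{O}(P_n):\widehat{p^{n+1}_n}(A_{n+1})=A_n\ \forall n\}$ ordered coordinatewise by inclusion. *)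

theory Defs
  imports Main
begin

text \<open>Sequences in P_n = {0,1,2,3}^n are lists of naturals of length n with entries < 4;
  the coordinate x(k) is x ! k (0-indexed).\<close>

definition Pn :: "nat \<Rightarrow> nat list set" where
  "Pn n = {x. length x = n \<and> (\<forall>k<n. x ! k < 4)}"

definition leqn :: "nat \<Rightarrow> nat list \<Rightarrow> nat list \<Rightarrow> bool" where
  "leqn n x y \<longleftrightarrow> x = y
     \<or> (\<exists>l<n. (\<forall>k<l. x ! k = y ! k) \<and> x ! l = 2 \<and> y ! l = 3
              \<and> (\<forall>k. l < k \<and> k < n \<longrightarrow> x ! k = y ! k \<and> x ! k \<in> {0,1}))
     \<or> (0 < n \<and> x ! 0 = 0 \<and> y ! 0 = 1
              \<and> (\<forall>k. 1 \<le> k \<and> k < n \<longrightarrow> x ! k = y ! k \<and> x ! k \<in> {0,1}))"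

definition downsets :: "nat \<Rightarrow> nat list set set" where
  "downsets n = {A. A \<subseteq> Pn n \<and> (\<forall>a\<in>A. \<forall>m\<in>Pn n. leqn n m a \<longrightarrow> m \<in> A)}"

definition downarrow :: "nat \<Rightarrow> nat list \<Rightarrow> nat list set" where
  "downarrow n x = {m \<in> Pn n. leqn n m x}"

definition maxels :: "nat \<Rightarrow> nat list set \<Rightarrow> nat list set" where
  "maxels n A = {a \<in> A. \<forall>b\<in>A. leqn n a b \<longrightarrow> b = a}"

definition hatp :: "nat \<Rightarrow> nat list set \<Rightarrow> nat list set" where
  "hatp n A = (\<Union>a\<in>maxels (Suc n) A. downarrow n (take n a))"

definition OP :: "(nat \<Rightarrow> nat list set) set" where
  "OP = {A. (\<forall>n. A n \<in> downsets n) \<and> (\<forall>n. hatp n (A (Suc n)) = A n)}"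

definition Tn :: "nat \<Rightarrow> nat list set" where
  "Tn n = {c \<in> Pn n. 0 < n \<and> c ! 0 \<in> {0,1}}"

text \<open>Elements of {0,1,2}^{T_n}, represented as functions that are 0 outside T_n.\<close>
definition Fn :: "nat \<Rightarrow> (nat list \<Rightarrow> nat) set" where
  "Fn n = {f. (\<forall>c\<in>Tn n. f c \<le> 2) \<and> (\<forall>c. c \<notin> Tn n \<longrightarrow> f c = 0)}"

definition q :: "nat \<Rightarrow> (nat list \<Rightarrow> nat) \<Rightarrow> (nat list \<Rightarrow> nat)" where
  "q n f = (\<lambda>c. if c \<in> Tn n then
      max (max (f (c @ [0])) (f (c @ [1])))
          (max (min (f (c @ [2])) 1) (2 * min (f (c @ [3])) 1))
    else 0)"

definition Lq :: "(nat \<Rightarrow> nat list \<Rightarrow> nat) set" where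
  "Lq = {F. (\<forall>n. F n \<in> Fn n) \<and> (\<forall>n. q n (F (Suc n)) = F n)}"

end

theory Submission
  imports Defs
begin

text \<open>
  For n > 0 the order on P_n relates only the two ends of disjoint two-element chains
  chain_elem False c < chain_elem True c, one chain for each c in T_n (this is proved by
  induction on n, peeling off the last coordinate).  A down-set of P_n is therefore the same
  thing as the function on T_n counting how many points of each chain it contains, a value in
  {0,1,2}, and under this coding the projection hat-p becomes exactly q: truncation maps the
  chains of c@[0] and c@[1] point by point onto the chain of c, the chain of c@[2] onto its
  lower point and the chain of c@[3] onto its upper point.  At level 0, where T_0 is empty,
  the down-set is recovered from level 1 through hat-p.
\<close>

fun chain_rev :: "bool \<Rightarrow> nat list \<Rightarrow> nat list" where
  "chain_rev b [] = []"
| "chain_rev b [i] = [2 * i + (if b then 1 else 0)]"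
| "chain_rev b (i # j # r) =
     (if i < 2 then i # chain_rev b (j # r) else (if b then 3 else 2) # chain_rev (i = 3) (j # r))"

text \<open>
  Reading c from the right, entries 0 and 1 are copied, while an entry 2 or 3 becomes 2 or 3
  according to a bit carried from the right (initially b) and passes the bit ``entry = 3''
  on to the left; the leading entry c(0) in {0,1} becomes 2 c(0) + bit.  These are the
  clauses (i) and (ii) of the order, read backwards.
\<close>
definition chain_elem :: "bool \<Rightarrow> nat list \<Rightarrow> nat list" where
  "chain_elem b c = rev (chain_rev b (rev c))"

lemma chain_elem_single: "chain_elem b [i] = [2 * i + (if b then 1 else 0)]"
  by (simp add: chain_elem_def)

lemma chain_elem_snoc:
  "c \<noteq> [] \<Longrightarrow> chain_elem b (c @ [i]) =
     chain_elem (if i < 2 then b else i = 3) c @ [if i < 2 then i else if b then 3 else 2]"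
  by (cases "rev c") (auto simp: chain_elem_def)

lemma chain_step_inj:
  assumes "i < 4" "i' < 4"
    and "(if i < 2 then b else i = 3) = (if i' < 2 then b' else i' = 3)"
    and "(if i < 2 then i else if b then 3 else 2) = (if i' < 2 then i' else if b' then 3 else (2::nat))"
  shows "b = b' \<and> i = i'"
  using assms by (auto split: if_splits)

lemma Pn_snoc_iff: "m @ [i] \<in> Pn (Suc n) \<longleftrightarrow> m \<in> Pn n \<and> i < 4"
  unfolding Pn_def by (auto simp: nth_append less_Suc_eq split: if_splits)

lemma length_Pn: "z \<in> Pn n \<Longrightarrow> length z = n"
  by (simp add: Pn_def)

lemma Pn_SucE:
  assumes "z \<in> Pn (Suc n)"
  obtains m i where "z = m @ [i]" "m \<in> Pn n" "i < 4"
proof -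
  have "z \<noteq> []" using assms by (auto simp: Pn_def)
  then obtain m i where "z = m @ [i]" by (metis rev_exhaust)
  with assms that show ?thesis by (simp add: Pn_snoc_iff)
qed

lemma Pn_0: "Pn 0 = {[]}"
  by (auto simp: Pn_def)

lemma Pn_1: "Pn (Suc 0) = (\<lambda>i. [i]) ` {..<4}"
  by (auto simp: Pn_def length_Suc_conv)

lemma Tn_0: "Tn 0 = {}"
  by (simp add: Tn_def)

lemma Tn_1: "Tn (Suc 0) = {[0], [1]}"
  by (auto simp: Tn_def Pn_1)

lemma Tn_imp_Pn: "c \<in> Tn n \<Longrightarrow> c \<in> Pn n"
  by (simp add: Tn_def)

lemma Tn_nonempty: "c \<in> Tn n \<Longrightarrow> 0 < n"
  by (simp add: Tn_def)

lemma Tn_not_Nil: "c \<in> Tn n \<Longrightarrow> c \<noteq> []"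
  by (auto simp: Tn_def Pn_def)

lemma Tn_snoc_iff: "0 < n \<Longrightarrow> c @ [i] \<in> Tn (Suc n) \<longleftrightarrow> c \<in> Tn n \<and> i < 4"
  unfolding Tn_def using length_Pn by (auto simp: Pn_snoc_iff nth_append)

lemma Tn_SucE:
  assumes "0 < n" "z \<in> Tn (Suc n)"
  obtains c i where "z = c @ [i]" "c \<in> Tn n" "i < 4"
  using assms by (metis Pn_SucE Tn_imp_Pn Tn_snoc_iff)

lemma chain_elem_in_Pn: "c \<in> Tn n \<Longrightarrow> chain_elem b c \<in> Pn n"
proof (induction n arbitrary: c b)
  case 0
  then show ?case by (simp add: Tn_0)
next
  case (Suc n)
  show ?case
  proof (cases "n = 0")
    case True
    with Suc.prems show ?thesis by (auto simp: Tn_1 Pn_1 chain_elem_single)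
  next
    case False
    with Suc.prems obtain d i where "c = d @ [i]" "d \<in> Tn n" "i < 4"
      by (auto elim: Tn_SucE)
    with Suc.IH show ?thesis by (simp add: chain_elem_snoc Tn_not_Nil Pn_snoc_iff)
  qed
qed

lemma chain_elem_inj:
  "c \<in> Tn n \<Longrightarrow> c' \<in> Tn n \<Longrightarrow> chain_elem b c = chain_elem b' c' \<Longrightarrow> b = b' \<and> c = c'"
proof (induction n arbitrary: c c' b b')
  case 0
  then show ?case by (simp add: Tn_0)
next
  case (Suc n)
  show ?case
  proof (cases "n = 0")
    case True
    with Suc.prems have "c \<in> {[0], [1]}" "c' \<in> {[0], [1]}" by (simp_all add: Tn_1)
    with Suc.prems(3) show ?thesis by (cases b; cases b'; auto simp: chain_elem_single)
  next
    case False
    then have "0 < n" by simp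
    obtain d i where c: "c = d @ [i]" "d \<in> Tn n" "i < 4"
      using Tn_SucE[OF \<open>0 < n\<close> Suc.prems(1)] by blast
    obtain d' i' where c': "c' = d' @ [i']" "d' \<in> Tn n" "i' < 4"
      using Tn_SucE[OF \<open>0 < n\<close> Suc.prems(2)] by blast
    let ?b = "if i < 2 then b else i = 3" and ?b' = "if i' < 2 then b' else i' = 3"
    have "chain_elem ?b d = chain_elem ?b' d'"
      and last: "(if i < 2 then i else if b then 3 else 2) = (if i' < 2 then i' else if b' then 3 else (2::nat))"
      using Suc.prems(3) c c' by (simp_all add: chain_elem_snoc Tn_not_Nil)
    then have "?b = ?b'" "d = d'"
      using Suc.IH[OF c(2) c'(2)] by simp_all
    then show ?thesis
      using chain_step_inj[OF c(3) c'(3) _ last] c c' by simp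
  qed
qed

lemma chain_elem_surj: "0 < n \<Longrightarrow> z \<in> Pn n \<Longrightarrow> \<exists>c\<in>Tn n. \<exists>b. z = chain_elem b c"
proof (induction n arbitrary: z rule: nat_induct_non_zero)
  case 1
  then obtain i where "i < 4" "z = [i]" by (auto simp: Pn_1)
  moreover have "[i] = chain_elem (odd i) [i div 2]"
    by (simp add: chain_elem_single)
  moreover have "[i div 2] \<in> Tn (Suc 0)"
    using \<open>i < 4\<close> by (simp add: Tn_1; arith)
  ultimately show ?case
    unfolding One_nat_def by blast
next
  case (Suc n)
  then obtain m i where z: "z = m @ [i]" "m \<in> Pn n" "i < 4" by (auto elim: Pn_SucE)
  then obtain c b where c: "c \<in> Tn n" "m = chain_elem b c" using Suc.IH by blast
  show ?case
  proof (cases "i < 2")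
    case True
    then show ?thesis
      using c z Suc.hyps
      by (intro bexI[of _ "c @ [i]"] exI[of _ b]) (simp_all add: chain_elem_snoc Tn_not_Nil Tn_snoc_iff)
  next
    case False
    then show ?thesis
      using c z Suc.hyps
      by (intro bexI[of _ "c @ [if b then 3 else 2]"] exI[of _ "i = 3"])
        (simp_all add: chain_elem_snoc Tn_not_Nil Tn_snoc_iff)
  qed
qed

definition covers_23 :: "nat \<Rightarrow> nat list \<Rightarrow> nat list \<Rightarrow> nat \<Rightarrow> bool" where
  "covers_23 n x y l \<longleftrightarrow> (\<forall>k<l. x ! k = y ! k) \<and> x ! l = 2 \<and> y ! l = 3
     \<and> (\<forall>k. l < k \<and> k < n \<longrightarrow> x ! k = y ! k \<and> x ! k \<in> {0,1})"

definition covers_01 :: "nat \<Rightarrow> nat list \<Rightarrow> nat list \<Rightarrow> bool" where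
  "covers_01 n x y \<longleftrightarrow> 0 < n \<and> x ! 0 = 0 \<and> y ! 0 = 1
     \<and> (\<forall>k. 1 \<le> k \<and> k < n \<longrightarrow> x ! k = y ! k \<and> x ! k \<in> {0,1})"

lemma leqn_iff_covers: "leqn n x y \<longleftrightarrow> x = y \<or> (\<exists>l<n. covers_23 n x y l) \<or> covers_01 n x y"
  unfolding leqn_def covers_23_def covers_01_def ..

lemma covers_23_snoc:
  assumes "length m = n" "length z = n" "l < Suc n"
  shows "covers_23 (Suc n) (m @ [i]) (z @ [j]) l \<longleftrightarrow>
           (l = n \<and> m = z \<and> i = 2 \<and> j = 3) \<or> (l < n \<and> i = j \<and> i < 2 \<and> covers_23 n m z l)"
proof (cases "l = n")
  case True
  with assms show ?thesis
    by (auto simp: covers_23_def nth_append list_eq_iff_nth_eq)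
next
  case False
  with assms have "l < n" by simp
  with assms show ?thesis
    by (auto simp: covers_23_def nth_append less_Suc_eq)
qed

lemma covers_01_snoc:
  assumes "length m = n" "length z = n" "0 < n"
  shows "covers_01 (Suc n) (m @ [i]) (z @ [j]) \<longleftrightarrow> i = j \<and> i < 2 \<and> covers_01 n m z"
  using assms by (auto simp: covers_01_def nth_append less_Suc_eq)

lemma leqn_snoc:
  assumes "length m = n" "length z = n" "0 < n"
  shows "leqn (Suc n) (m @ [i]) (z @ [j]) \<longleftrightarrow>
           (m = z \<and> (i = j \<or> i = 2 \<and> j = 3)) \<or> (i = j \<and> i < 2 \<and> leqn n m z)"
  unfolding leqn_iff_covers[of "Suc n"] leqn_iff_covers[of n]
  using covers_23_snoc[OF assms(1,2)] covers_01_snoc[OF assms] by (auto simp: less_Suc_eq)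

definition chain_pair :: "nat \<Rightarrow> nat list \<Rightarrow> nat list \<Rightarrow> bool" where
  "chain_pair n x y \<longleftrightarrow> (\<exists>c\<in>Tn n. x = chain_elem False c \<and> y = chain_elem True c)"

lemma chain_pair_snoc:
  assumes "0 < n" "m \<in> Pn n"
  shows "chain_pair (Suc n) (m @ [i]) (z @ [j]) \<longleftrightarrow>
           (m = z \<and> i = 2 \<and> j = 3) \<or> (i = j \<and> i < 2 \<and> chain_pair n m z)"
proof
  assume "chain_pair (Suc n) (m @ [i]) (z @ [j])"
  then obtain c where c: "c \<in> Tn (Suc n)" "m @ [i] = chain_elem False c" "z @ [j] = chain_elem True c"
    by (auto simp: chain_pair_def)
  then obtain d k where "c = d @ [k]" "d \<in> Tn n" "k < 4"
    using Tn_SucE[OF assms(1)] by blast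
  with c show "(m = z \<and> i = 2 \<and> j = 3) \<or> (i = j \<and> i < 2 \<and> chain_pair n m z)"
    by (cases "k < 2") (auto simp: chain_elem_snoc Tn_not_Nil chain_pair_def)
next
  assume "(m = z \<and> i = 2 \<and> j = 3) \<or> (i = j \<and> i < 2 \<and> chain_pair n m z)"
  then show "chain_pair (Suc n) (m @ [i]) (z @ [j])"
  proof (elim disjE conjE)
    assume "m = z" "i = 2" "j = 3"
    obtain d b where "d \<in> Tn n" "m = chain_elem b d"
      using chain_elem_surj[OF assms] by blast
    with \<open>m = z\<close> \<open>i = 2\<close> \<open>j = 3\<close> assms(1) show ?thesis
      unfolding chain_pair_def
      by (intro bexI[of _ "d @ [if b then 3 else 2]"]) (auto simp: chain_elem_snoc Tn_not_Nil Tn_snoc_iff)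
  next
    assume "i = j" "i < 2" "chain_pair n m z"
    then obtain d where "d \<in> Tn n" "m = chain_elem False d" "z = chain_elem True d"
      by (auto simp: chain_pair_def)
    with \<open>i = j\<close> \<open>i < 2\<close> assms(1) show ?thesis
      unfolding chain_pair_def
      by (intro bexI[of _ "d @ [i]"]) (auto simp: chain_elem_snoc Tn_not_Nil Tn_snoc_iff)
  qed
qed

lemma leqn_iff_chain_pair:
  "0 < n \<Longrightarrow> x \<in> Pn n \<Longrightarrow> y \<in> Pn n \<Longrightarrow> leqn n x y \<longleftrightarrow> x = y \<or> chain_pair n x y"
proof (induction n arbitrary: x y rule: nat_induct_non_zero)
  case 1
  then obtain i j where "x = [i]" "y = [j]"
    by (auto simp: Pn_1)
  then show ?case
    by (auto simp: leqn_def chain_pair_def Tn_1 chain_elem_single)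
next
  case (Suc n)
  then obtain m i z j where x: "x = m @ [i]" "m \<in> Pn n" and y: "y = z @ [j]" "z \<in> Pn n"
    by (metis Pn_SucE)
  then show ?case
    using Suc.IH[OF x(2) y(2)] Suc.hyps
    by (simp add: leqn_snoc length_Pn chain_pair_snoc) blast
qed

lemma chain_elem_mem_image_iff:
  assumes "c \<in> Tn n" "S \<subseteq> Tn n"
  shows "chain_elem b c \<in> chain_elem b' ` S \<longleftrightarrow> b = b' \<and> c \<in> S"
proof
  assume "chain_elem b c \<in> chain_elem b' ` S"
  then obtain c' where "c' \<in> S" "chain_elem b c = chain_elem b' c'" by blast
  with assms chain_elem_inj[OF assms(1), of c' b b'] show "b = b' \<and> c \<in> S" by auto
qed auto

lemma chain_pair_chain_elem_iff:
  assumes "c \<in> Tn n"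
  shows "chain_pair n (chain_elem b c) w \<longleftrightarrow> \<not> b \<and> w = chain_elem True c"
proof
  assume "chain_pair n (chain_elem b c) w"
  then obtain c' where "c' \<in> Tn n" "chain_elem b c = chain_elem False c'" "w = chain_elem True c'"
    by (auto simp: chain_pair_def)
  with chain_elem_inj[OF assms, of c' b False] show "\<not> b \<and> w = chain_elem True c" by auto
qed (use assms in \<open>auto simp: chain_pair_def\<close>)

lemma leqn_refl: "leqn n x x"
  by (simp add: leqn_def)

lemma leqn_trans:
  assumes "x \<in> Pn n" "y \<in> Pn n" "w \<in> Pn n" "leqn n x y" "leqn n y w"
  shows "leqn n x w"
proof (cases "n = 0")
  case True
  with assms show ?thesis by (simp add: Pn_0 leqn_refl)
next
  case False
  then have n: "0 < n" by simp
  have "x = y \<or> chain_pair n x y" "y = w \<or> chain_pair n y w"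
    using assms leqn_iff_chain_pair[OF n] by blast+
  moreover have "\<not> chain_pair n y w" if "chain_pair n x y"
  proof -
    from that obtain c where "c \<in> Tn n" "y = chain_elem True c"
      by (auto simp: chain_pair_def)
    then show ?thesis by (simp add: chain_pair_chain_elem_iff)
  qed
  ultimately have "x = w \<or> chain_pair n x w" by blast
  with assms n show ?thesis
    using leqn_iff_chain_pair by blast
qed

lemma leqn_chain_elem_iff:
  assumes "c \<in> Tn n" "w \<in> Pn n"
  shows "leqn n (chain_elem b c) w \<longleftrightarrow> w = chain_elem b c \<or> (\<not> b \<and> w = chain_elem True c)"
  using leqn_iff_chain_pair[OF Tn_nonempty[OF assms(1)] chain_elem_in_Pn[OF assms(1)] assms(2)]
    chain_pair_chain_elem_iff[OF assms(1)] by auto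

lemma mem_downsets_iff:
  assumes "0 < n"
  shows "A \<in> downsets n \<longleftrightarrow>
           A \<subseteq> Pn n \<and> (\<forall>c\<in>Tn n. chain_elem True c \<in> A \<longrightarrow> chain_elem False c \<in> A)"
proof
  assume A: "A \<in> downsets n"
  have "chain_elem False c \<in> A" if c: "c \<in> Tn n" and "chain_elem True c \<in> A" for c
  proof -
    have "leqn n (chain_elem False c) (chain_elem True c)"
      using leqn_chain_elem_iff[OF c chain_elem_in_Pn[OF c]] by simp
    with A that show ?thesis
      using chain_elem_in_Pn[OF c] by (auto simp: downsets_def)
  qed
  with A show "A \<subseteq> Pn n \<and> (\<forall>c\<in>Tn n. chain_elem True c \<in> A \<longrightarrow> chain_elem False c \<in> A)"
    by (simp add: downsets_def)
next
  assume A: "A \<subseteq> Pn n \<and> (\<forall>c\<in>Tn n. chain_elem True c \<in> A \<longrightarrow> chain_elem False c \<in> A)"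
  have "m \<in> A" if "a \<in> A" "m \<in> Pn n" "leqn n m a" for a m
  proof -
    obtain c b where c: "c \<in> Tn n" and m: "m = chain_elem b c"
      using chain_elem_surj[OF assms \<open>m \<in> Pn n\<close>] by blast
    have "a = m \<or> (\<not> b \<and> a = chain_elem True c)"
      using leqn_chain_elem_iff[OF c, of a b] A that m by auto
    with A c m \<open>a \<in> A\<close> show ?thesis by auto
  qed
  with A show "A \<in> downsets n"
    by (simp add: downsets_def)
qed

definition chain_level :: "bool \<Rightarrow> bool \<Rightarrow> nat" where
  "chain_level u l = (if u then 2 else if l then 1 else 0)"

definition downset_code :: "nat \<Rightarrow> nat list set \<Rightarrow> nat list \<Rightarrow> nat" where
  "downset_code n A c =
     (if c \<in> Tn n then chain_level (chain_elem True c \<in> A) (chain_elem False c \<in> A) else 0)"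

definition code_downset :: "nat \<Rightarrow> (nat list \<Rightarrow> nat) \<Rightarrow> nat list set" where
  "code_downset n f =
     chain_elem False ` {c \<in> Tn n. 1 \<le> f c} \<union> chain_elem True ` {c \<in> Tn n. 2 \<le> f c}"

lemma chain_elem_mem_code_downset_iff:
  "c \<in> Tn n \<Longrightarrow> chain_elem b c \<in> code_downset n f \<longleftrightarrow> (if b then 2 else 1) \<le> f c"
  unfolding code_downset_def by (subst Un_iff, subst (1 2) chain_elem_mem_image_iff) auto

lemma downset_code_in_Fn: "downset_code n A \<in> Fn n"
  by (simp add: Fn_def downset_code_def chain_level_def)

lemma code_downset_in_downsets: "code_downset n f \<in> downsets n"
proof (cases "n = 0")
  case True
  then show ?thesis by (simp add: code_downset_def downsets_def Tn_0)
next
  case False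
  have "code_downset n f \<subseteq> Pn n"
    unfolding code_downset_def using chain_elem_in_Pn by blast
  with False show ?thesis
    by (simp add: mem_downsets_iff chain_elem_mem_code_downset_iff)
qed

lemma code_downset_downset_code:
  assumes "0 < n" "A \<in> downsets n"
  shows "code_downset n (downset_code n A) = A"
proof -
  have "z \<in> code_downset n (downset_code n A) \<longleftrightarrow> z \<in> A" if z: "z \<in> Pn n" for z
  proof -
    obtain c b where c: "c \<in> Tn n" and "z = chain_elem b c"
      using chain_elem_surj[OF assms(1) z] by blast
    moreover have "chain_elem True c \<in> A \<longrightarrow> chain_elem False c \<in> A"
      using assms c by (simp add: mem_downsets_iff)
    ultimately show ?thesis
      by (cases b) (auto simp: chain_elem_mem_code_downset_iff downset_code_def chain_level_def)
  qed
  moreover have "code_downset n (downset_code n A) \<subseteq> Pn n" "A \<subseteq> Pn n"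
    using code_downset_in_downsets assms(2) by (auto simp: downsets_def)
  ultimately show ?thesis by blast
qed

lemma downset_code_code_downset:
  assumes "f \<in> Fn n"
  shows "downset_code n (code_downset n f) = f"
proof
  fix c
  show "downset_code n (code_downset n f) c = f c"
  proof (cases "c \<in> Tn n")
    case True
    with assms have "f c \<le> 2" by (simp add: Fn_def)
    with True show ?thesis
      by (simp add: downset_code_def chain_level_def chain_elem_mem_code_downset_iff)
  next
    case False
    with assms show ?thesis by (simp add: downset_code_def Fn_def)
  qed
qed

lemma downset_code_mono: "A \<subseteq> B \<Longrightarrow> downset_code n A c \<le> downset_code n B c"
  by (auto simp: downset_code_def chain_level_def)

lemma code_downset_mono: "(\<And>c. f c \<le> g c) \<Longrightarrow> code_downset n f \<subseteq> code_downset n g"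
  unfolding code_downset_def by (intro Un_mono image_mono) (auto intro: order_trans)

lemma take_in_Pn: "a \<in> Pn (Suc n) \<Longrightarrow> take n a \<in> Pn n"
  by (auto elim: Pn_SucE simp: length_Pn)

lemma ex_take_eq_iff:
  assumes "A \<subseteq> Pn (Suc n)" "m \<in> Pn n"
  shows "(\<exists>a\<in>A. take n a = m) \<longleftrightarrow> (\<exists>i<4. m @ [i] \<in> A)"
proof
  assume "\<exists>a\<in>A. take n a = m"
  then obtain a where a: "a \<in> A" "take n a = m" by blast
  with assms(1) obtain m' i where "a = m' @ [i]" "m' \<in> Pn n" "i < 4"
    by (blast elim: Pn_SucE)
  with a show "\<exists>i<4. m @ [i] \<in> A"
    by (auto simp: length_Pn)
next
  assume "\<exists>i<4. m @ [i] \<in> A"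
  then obtain i where "m @ [i] \<in> A" by blast
  moreover have "take n (m @ [i]) = m"
    using length_Pn[OF assms(2)] by simp
  ultimately show "\<exists>a\<in>A. take n a = m" by blast
qed

lemma leqn_take_chain_elem:
  assumes "c \<in> Tn (Suc n)"
  shows "leqn n (take n (chain_elem False c)) (take n (chain_elem True c))"
proof (cases "n = 0")
  case True
  then show ?thesis by (simp add: leqn_refl)
next
  case False
  with assms obtain d k where d: "c = d @ [k]" "d \<in> Tn n" "k < 4"
    by (auto elim: Tn_SucE)
  have "length (chain_elem b d) = n" for b
    using chain_elem_in_Pn[OF d(2)] length_Pn by blast
  moreover have "leqn n (chain_elem False d) (chain_elem True d)"
    using leqn_chain_elem_iff[OF d(2) chain_elem_in_Pn[OF d(2)]] by simp
  ultimately show ?thesis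
    using d by (cases "k < 2") (simp_all add: chain_elem_snoc Tn_not_Nil leqn_refl)
qed

lemma ex_maxel_above:
  assumes A: "A \<in> downsets (Suc n)" and "a \<in> A"
  shows "\<exists>b\<in>maxels (Suc n) A. leqn n (take n a) (take n b)"
proof (cases "a \<in> maxels (Suc n) A")
  case True
  then show ?thesis by (auto intro: leqn_refl)
next
  case False
  have AP: "A \<subseteq> Pn (Suc n)"
    using A by (simp add: downsets_def)
  with False \<open>a \<in> A\<close> obtain b where b: "b \<in> A" "leqn (Suc n) a b" "b \<noteq> a"
    by (auto simp: maxels_def)
  then obtain c where c: "c \<in> Tn (Suc n)" "a = chain_elem False c" "b = chain_elem True c"
    using leqn_iff_chain_pair[of "Suc n" a b] AP \<open>a \<in> A\<close> by (auto simp: chain_pair_def)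
  have "b \<in> maxels (Suc n) A"
    using leqn_chain_elem_iff[OF c(1)] AP b(1) c(3) by (auto simp: maxels_def)
  with c show ?thesis
    using leqn_take_chain_elem by blast
qed

lemma hatp_eq:
  assumes A: "A \<in> downsets (Suc n)"
  shows "hatp n A = {m \<in> Pn n. \<exists>a\<in>A. leqn n m (take n a)}"
proof
  show "hatp n A \<subseteq> {m \<in> Pn n. \<exists>a\<in>A. leqn n m (take n a)}"
    unfolding hatp_def downarrow_def maxels_def by blast
next
  have AP: "A \<subseteq> Pn (Suc n)"
    using A by (simp add: downsets_def)
  show "{m \<in> Pn n. \<exists>a\<in>A. leqn n m (take n a)} \<subseteq> hatp n A"
  proof safe
    fix m a
    assume m: "m \<in> Pn n" and a: "a \<in> A" and ma: "leqn n m (take n a)"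
    obtain b where b: "b \<in> maxels (Suc n) A" and ab: "leqn n (take n a) (take n b)"
      using ex_maxel_above[OF A a] by blast
    have "b \<in> A"
      using b by (simp add: maxels_def)
    with a AP have "take n a \<in> Pn n" "take n b \<in> Pn n"
      by (auto intro: take_in_Pn)
    with m ma ab have "leqn n m (take n b)"
      using leqn_trans by blast
    with b m show "m \<in> hatp n A"
      by (auto simp: hatp_def downarrow_def)
  qed
qed

lemma hatp_in_downsets:
  assumes A: "A \<in> downsets (Suc n)"
  shows "hatp n A \<in> downsets n"
  using A take_in_Pn leqn_trans
  unfolding hatp_eq[OF A] downsets_def by blast

lemma hatp_mono:
  "A \<in> downsets (Suc n) \<Longrightarrow> B \<in> downsets (Suc n) \<Longrightarrow> A \<subseteq> B \<Longrightarrow> hatp n A \<subseteq> hatp n B"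
  by (auto simp: hatp_eq)

lemma chain_elem_mem_hatp_iff:
  assumes A: "A \<in> downsets (Suc n)" and c: "c \<in> Tn n"
  shows "chain_elem b c \<in> hatp n A \<longleftrightarrow>
           (\<exists>i<4. chain_elem b c @ [i] \<in> A) \<or> (\<not> b \<and> (\<exists>i<4. chain_elem True c @ [i] \<in> A))"
proof -
  have AP: "A \<subseteq> Pn (Suc n)"
    using A by (simp add: downsets_def)
  have "chain_elem b c \<in> hatp n A \<longleftrightarrow> (\<exists>a\<in>A. leqn n (chain_elem b c) (take n a))"
    using chain_elem_in_Pn[OF c] by (simp add: hatp_eq[OF A])
  also have "\<dots> \<longleftrightarrow> (\<exists>a\<in>A. take n a = chain_elem b c \<or> (\<not> b \<and> take n a = chain_elem True c))"
    using leqn_chain_elem_iff[OF c take_in_Pn] AP by (intro bex_cong) auto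
  also have "\<dots> \<longleftrightarrow> (\<exists>a\<in>A. take n a = chain_elem b c) \<or> (\<not> b \<and> (\<exists>a\<in>A. take n a = chain_elem True c))"
    by blast
  also have "\<dots> \<longleftrightarrow> (\<exists>i<4. chain_elem b c @ [i] \<in> A) \<or> (\<not> b \<and> (\<exists>i<4. chain_elem True c @ [i] \<in> A))"
    by (simp only: ex_take_eq_iff[OF AP chain_elem_in_Pn[OF c]])
  finally show ?thesis .
qed

lemma ex_less_four_iff: "(\<exists>i<4. P i) \<longleftrightarrow> P 0 \<or> P 1 \<or> P 2 \<or> P (3::nat)"
proof -
  have "{..<4::nat} = {0, 1, 2, 3}" by auto
  then show ?thesis by (metis (no_types) empty_iff insert_iff lessThan_iff)
qed

lemma max_chain_levels:
  "max (max (chain_level u0 l0) (chain_level u1 l1)) (max (min (chain_level l3 l2) 1) (2 * min (chain_level u3 u2) 1))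
     = chain_level (u0 \<or> u1 \<or> u2 \<or> u3) (l0 \<or> l1 \<or> l2 \<or> l3 \<or> u0 \<or> u1 \<or> u2 \<or> u3)"
  unfolding chain_level_def
  by (cases u0; cases u1; cases u2; cases u3; simp; cases l0; simp; cases l1; simp; cases l2; simp)

lemma downset_code_hatp:
  assumes A: "A \<in> downsets (Suc n)"
  shows "downset_code n (hatp n A) = q n (downset_code (Suc n) A)"
proof
  fix c
  show "downset_code n (hatp n A) c = q n (downset_code (Suc n) A) c"
  proof (cases "c \<in> Tn n")
    case False
    then show ?thesis by (simp add: downset_code_def q_def)
  next
    case c: True
    let ?U = "chain_elem True c" and ?L = "chain_elem False c"
    have T: "c @ [i] \<in> Tn (Suc n)" if "i < 4" for i
      using Tn_snoc_iff[OF Tn_nonempty[OF c]] c that by simp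
    have "downset_code (Suc n) A (c @ [0]) = chain_level (?U @ [0] \<in> A) (?L @ [0] \<in> A)"
      "downset_code (Suc n) A (c @ [1]) = chain_level (?U @ [1] \<in> A) (?L @ [1] \<in> A)"
      "downset_code (Suc n) A (c @ [2]) = chain_level (?L @ [3] \<in> A) (?L @ [2] \<in> A)"
      "downset_code (Suc n) A (c @ [3]) = chain_level (?U @ [3] \<in> A) (?U @ [2] \<in> A)"
      using T Tn_not_Nil[OF c] by (simp_all add: downset_code_def chain_elem_snoc)
    then have "q n (downset_code (Suc n) A) c = chain_level
        (?U @ [0] \<in> A \<or> ?U @ [1] \<in> A \<or> ?U @ [2] \<in> A \<or> ?U @ [3] \<in> A)
        (?L @ [0] \<in> A \<or> ?L @ [1] \<in> A \<or> ?L @ [2] \<in> A \<or> ?L @ [3] \<in> A \<or>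
         ?U @ [0] \<in> A \<or> ?U @ [1] \<in> A \<or> ?U @ [2] \<in> A \<or> ?U @ [3] \<in> A)"
      unfolding q_def if_P[OF c] by (simp only: max_chain_levels)
    then show ?thesis
      using c by (simp add: downset_code_def chain_elem_mem_hatp_iff[OF A c] ex_less_four_iff)
  qed
qed

definition limit_code :: "(nat \<Rightarrow> nat list set) \<Rightarrow> nat \<Rightarrow> nat list \<Rightarrow> nat" where
  "limit_code A n = downset_code n (A n)"

lemma downset_code_0: "downset_code 0 A = (\<lambda>c. 0)"
  by (simp add: downset_code_def Tn_0 fun_eq_iff)

lemma Fn_0: "Fn 0 = {\<lambda>c. 0}"
  by (auto simp: Fn_def Tn_0)

lemma limit_code_in_Lq: "A \<in> OP \<Longrightarrow> limit_code A \<in> Lq"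
  unfolding Lq_def limit_code_def
  by (auto simp: OP_def downset_code_in_Fn downset_code_hatp[symmetric])

lemma OP_subset_iff_pos:
  assumes "A \<in> OP" "B \<in> OP"
  shows "(\<forall>n. A n \<subseteq> B n) \<longleftrightarrow> (\<forall>n>0. A n \<subseteq> B n)"
proof -
  have "A 0 \<subseteq> B 0" if "A 1 \<subseteq> B 1"
    using assms hatp_mono[of "A 1" 0 "B 1"] that by (simp add: OP_def)
  then show ?thesis by (metis neq0_conv zero_less_one)
qed

lemma limit_code_le_iff:
  assumes "A \<in> OP" "B \<in> OP"
  shows "(\<forall>n. A n \<subseteq> B n) \<longleftrightarrow> (\<forall>n c. limit_code A n c \<le> limit_code B n c)"
proof
  assume "\<forall>n. A n \<subseteq> B n"
  then show "\<forall>n c. limit_code A n c \<le> limit_code B n c"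
    by (simp add: limit_code_def downset_code_mono)
next
  assume le: "\<forall>n c. limit_code A n c \<le> limit_code B n c"
  have "A n \<subseteq> B n" if "0 < n" for n
  proof -
    have "A n = code_downset n (downset_code n (A n))" "B n = code_downset n (downset_code n (B n))"
      using assms code_downset_downset_code[OF that] by (simp_all add: OP_def)
    with le show ?thesis
      using code_downset_mono[of "downset_code n (A n)" "downset_code n (B n)" n]
      by (simp add: limit_code_def)
  qed
  with OP_subset_iff_pos[OF assms] show "\<forall>n. A n \<subseteq> B n" by blast
qed

lemma Lq_subset_limit_code_image: "Lq \<subseteq> limit_code ` OP"
proof
  fix F
  assume F: "F \<in> Lq"
  define A where "A n = (if n = 0 then hatp 0 (code_downset 1 (F 1)) else code_downset n (F n))" for n
  have "A n \<in> downsets n" for n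
    by (simp add: A_def hatp_in_downsets code_downset_in_downsets)
  moreover have "hatp n (A (Suc n)) = A n" for n
  proof (cases "n = 0")
    case True
    then show ?thesis by (simp add: A_def One_nat_def)
  next
    case False
    have "downset_code n (hatp n (A (Suc n))) = F n"
      using F by (simp add: A_def downset_code_hatp code_downset_in_downsets downset_code_code_downset Lq_def)
    then have "hatp n (A (Suc n)) = code_downset n (F n)"
      using code_downset_downset_code[of n "hatp n (A (Suc n))"] False
      by (simp add: A_def hatp_in_downsets code_downset_in_downsets)
    with False show ?thesis by (simp add: A_def)
  qed
  ultimately have "A \<in> OP"
    by (simp add: OP_def)
  moreover have "limit_code A n = F n" for n
  proof -
    have "F n \<in> Fn n"
      using F by (simp add: Lq_def)
    then show ?thesis
      by (cases "n = 0") (simp_all add: limit_code_def A_def Fn_0 downset_code_0 downset_code_code_downset)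
  qed
  ultimately show "F \<in> limit_code ` OP"
    by (metis ext image_eqI)
qed

theorem mainTheorem19:
  shows "\<exists>\<Phi>. bij_betw \<Phi> OP Lq \<and>
    (\<forall>A\<in>OP. \<forall>B\<in>OP. (\<forall>n. A n \<subseteq> B n) \<longleftrightarrow> (\<forall>n c. \<Phi> A n c \<le> \<Phi> B n c))"
proof (intro exI conjI)
  have "inj_on limit_code OP"
  proof (rule inj_onI)
    fix A B
    assume "A \<in> OP" "B \<in> OP" "limit_code A = limit_code B"
    then have "\<forall>n. A n \<subseteq> B n" "\<forall>n. B n \<subseteq> A n"
      using limit_code_le_iff by auto
    then show "A = B" by blast
  qed
  moreover have "limit_code ` OP = Lq"
    using limit_code_in_Lq Lq_subset_limit_code_image by blast
  ultimately show "bij_betw limit_code OP Lq"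
    by (simp add: bij_betw_def)
  show "\<forall>A\<in>OP. \<forall>B\<in>OP. (\<forall>n. A n \<subseteq> B n) \<longleftrightarrow> (\<forall>n c. limit_code A n c \<le> limit_code B n c)"
    using limit_code_le_iff by blast
qed

end
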